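(* Let $\mathcal{X}$ be a compact metric space and $k:\mathcal{X}^2\to\mathbb{R}$ a continuous, universal kernel with $\sup_{x\in\mathcal{X}}\sqrt{k(x,x)}\le K<\infty$, and let $\mathcal{H}$ be its reproducing kernel Hilbert space. Let $\ell:\mathbb{R}\to\mathbb{R}$ be non-decreasing, convex and non-negative, and suppose that for every $M>0$ there is $z_0$ such that $g\ge M$ for all $z\ge z_0$ and all $g\in\partial\ell(z)$. Let $(x_1,y_1),\ldots,(x_{m_1},y_{m_1})\in\mathcal{X}\times\{+1,-1\}$, let $M_p=\{i:y_i=+1\}$, $M_n=\{i:y_i=-1\}$, and suppose both are non-empty. Let $\lambda>0$. Then the problem $$\min_{f\in\mathcal{H},\,b\in\mathbb{R},\,\rho\in\mathbb{R}}\ -2\rho+\frac{1}{m_1}\sum_{i=1}^{m_1}\ell\big(\rho-y_i(f(x_i)+b)\big)\quad\text{subject to }\|f\|_{\mathcal{H}}^2\le\lambda^2$$ has an optimal solution. Moreover there is no duality gap: its optimal value equals $$-\inf\Big\{c_p+c_n+\lambda\|f_p-f_n\|_{\mathcal{H}}\;:\;c_p,c_n\in\mathbb{R},\ f_p\in\mathcal{U}_p[c_p],\ f_n\in\mathcal{U}_n[c_n]\Big\},$$ where for $o\in\{p,n\}$ and $c\in\mathbb{R}$, $$\mathcal{U}_o[c]=\Big\{\sum_{i\in M_o}\alpha_i k(\cdot,x_i)\;:\;\sum_{i\in M_o}\alpha_i=1,\ \alpha_i\ge0\ (i\in M_o),\ \frac{1}{m_1}\sum_{i\in M_o}\ell^*(m_1\alpha_i)\le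 c\Big\},$$ i.e. the Lagrangian dual of the first problem is this minimum-distance problem between the uncertainty sets.
   Context: A kernel is universal if its RKHS is dense in the space of continuous functions on $\mathcal{X}$ with respect to the supremum norm. $\partial\ell(z)$ is the subdifferential of $\ell$ at $z$, and $\ell^*(x)=\sup_{z\in\mathbb{R}}\{xz-\ell(z)\}$ is the convex conjugate. *)

theory Defs
  imports "HOL-Analysis.Analysis"
begin

text \<open>The RKHS of a kernel k on X is represented (up to isometric isomorphism)
 by a real Hilbert space 'h together with the canonical feature map
 \<phi> x = k(\<cdot>,x): k x y = \<langle>\<phi> x, \<phi> y\<rangle> and the span of \<phi>(X) is dense.
 The element h of 'h stands for the function x \<mapsto> \<langle>h, \<phi> x\<rangle>, with RKHS norm norm h.\<close>
definition is_rkhs_feature :: "'a set \<Rightarrow> ('a \<Rightarrow> 'a \<Rightarrow> real) \<Rightarrow> ('a \<Rightarrow> 'h::{real_inner,complete_space}) \<Rightarrow> bool" where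
  "is_rkhs_feature X k \<phi> \<longleftrightarrow>
     (\<forall>x\<in>X. \<forall>y\<in>X. k x y = \<phi> x \<bullet> \<phi> y) \<and> closure (span (\<phi> ` X)) = UNIV"

definition universal_kernel :: "'a::topological_space set \<Rightarrow> ('a \<Rightarrow> 'h::real_inner) \<Rightarrow> bool" where
  "universal_kernel X \<phi> \<longleftrightarrow>
     (\<forall>g. continuous_on X g \<longrightarrow> (\<forall>e>0. \<exists>h. \<forall>x\<in>X. \<bar>g x - h \<bullet> \<phi> x\<bar> < e))"

definition subdiff :: "(real \<Rightarrow> real) \<Rightarrow> real \<Rightarrow> real set" where
  "subdiff l z = {g. \<forall>w. l w \<ge> l z + g * (w - z)}"

definition conj_fun :: "(real \<Rightarrow> real) \<Rightarrow> real \<Rightarrow> ereal" where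
  "conj_fun l v = (SUP z. ereal (v * z - l z))"

definition uset :: "(real \<Rightarrow> real) \<Rightarrow> nat \<Rightarrow> ('a \<Rightarrow> 'h::real_inner) \<Rightarrow> (nat \<Rightarrow> 'a) \<Rightarrow> nat set \<Rightarrow> real \<Rightarrow> 'h set" where
  "uset l m1 \<phi> x Mo c =
     {(\<Sum>i\<in>Mo. \<alpha> i *\<^sub>R \<phi> (x i)) | \<alpha>. sum \<alpha> Mo = 1 \<and> (\<forall>i\<in>Mo. \<alpha> i \<ge> 0) \<and>
        ereal (1 / real m1) * (\<Sum>i\<in>Mo. conj_fun l (real m1 * \<alpha> i)) \<le> ereal c}"

definition primal_obj :: "(real \<Rightarrow> real) \<Rightarrow> nat \<Rightarrow> ('a \<Rightarrow> 'h::real_inner) \<Rightarrow> (nat \<Rightarrow> 'a) \<Rightarrow> (nat \<Rightarrow> real) \<Rightarrow> 'h \<Rightarrow> real \<Rightarrow> real \<Rightarrow> real" where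
  "primal_obj l m1 \<phi> x y f b \<rho> =
     - 2 * \<rho> + (1 / real m1) * (\<Sum>i=1..m1. l (\<rho> - y i * (f \<bullet> \<phi> (x i) + b)))"

end

theory Submission
  imports Defs
begin

text \<open>A minimiser exists because the objective is coercive in \<open>(b, \<rho>)\<close> on the ball (the loss grows
  superlinearly) and only the projection of \<open>f\<close> onto the span of the finitely many features
  matters, which reduces the problem to a compact set. At a minimiser, a separation argument
  in the space of residuals of the KKT system shows that subgradients \<open>g i\<close> of the loss exist with
  \<open>\<Sum> g i = 2 m\<close>, \<open>\<Sum> g i y i = 0\<close> and \<open>\<Sum> g i y i \<phi>(x i)\<close> aligned with \<open>f\<close>: otherwise the separating
  vector yields a feasible descent direction. Normalising \<open>g\<close> on each class gives points of the
  uncertainty sets whose dual value equals the primal optimum (the Fenchel--Young inequality is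
  an equality at subgradients), while for arbitrary dual points Fenchel--Young and Cauchy--Schwarz
  give weak duality.\<close>

section \<open>Finite-dimensional subspaces of a real inner product space\<close>

lemma min_norm_point_separates_0:
  fixes K :: "'a::real_inner set"
  assumes "compact K" "convex K" "K \<noteq> {}" "0 \<notin> K"
  obtains p where "p \<noteq> 0" "\<And>q. q \<in> K \<Longrightarrow> p \<bullet> p \<le> p \<bullet> q"
proof -
  obtain p where pK: "p \<in> K" and pmin: "\<And>q. q \<in> K \<Longrightarrow> norm p \<le> norm q"
    using continuous_attains_inf[OF assms(1,3), of norm] continuous_on_norm_id by blast
  have "p \<bullet> p \<le> p \<bullet> q" if q: "q \<in> K" for q
  proof (rule ccontr)
    assume "\<not> ?thesis"
    define c where "c = p \<bullet> (q - p)"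
    define n where "n = (q - p) \<bullet> (q - p)"
    have c: "c < 0" using \<open>\<not> p \<bullet> p \<le> p \<bullet> q\<close> by (simp add: c_def inner_diff_right)
    then have n: "n > 0" by (auto simp: n_def c_def)
    define t where "t = min 1 (-c/n)"
    have t: "0 < t" "t \<le> 1" "t * n \<le> -c"
      using c n by (auto simp: t_def min_def field_simps)
    have "p + t *\<^sub>R (q - p) = (1 - t) *\<^sub>R p + t *\<^sub>R q" by (simp add: algebra_simps)
    also have "\<dots> \<in> K" using assms(2) pK q t unfolding convex_def by auto
    finally have "(norm p)\<^sup>2 \<le> (norm (p + t *\<^sub>R (q - p)))\<^sup>2" using pmin by (simp add: power_mono)
    also have "\<dots> = p \<bullet> p + t * (2 * c + t * n)"
      by (simp add: power2_norm_eq_inner c_def n_def inner_add_left inner_add_right inner_commute algebra_simps)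
    finally have "0 \<le> t * (2 * c + t * n)" by (simp add: power2_norm_eq_inner)
    moreover have "2 * c + t * n < 0" using t c by linarith
    ultimately show False using t(1) by (simp add: zero_le_mult_iff)
  qed
  moreover have "p \<noteq> 0" using pK assms(4) by auto
  ultimately show thesis using that by blast
qed

text \<open>The nearest point of the span, which exists by the compactness hypothesis, is the
  orthogonal projection.\<close>
lemma orthogonal_projection_exists:
  fixes S :: "'a::real_inner set"
  assumes cpt: "\<And>R. compact (span S \<inter> cball 0 R)"
  obtains p where "p \<in> span S" "\<And>s. s \<in> span S \<Longrightarrow> (f - p) \<bullet> s = 0"
proof -
  let ?C = "span S \<inter> cball 0 (2 * norm f)"
  have "0 \<in> ?C" by (simp add: span_zero)
  moreover have "continuous_on ?C (\<lambda>q. norm (f - q))" by (intro continuous_intros)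
  ultimately obtain p where pC: "p \<in> ?C" and pm: "\<And>q. q \<in> ?C \<Longrightarrow> norm (f - p) \<le> norm (f - q)"
    using continuous_attains_inf[OF cpt, of _ "\<lambda>q. norm (f - q)"] by blast
  have pmin: "norm (f - p) \<le> norm (f - q)" if "q \<in> span S" for q
  proof (cases "norm q \<le> 2 * norm f")
    case True then show ?thesis using pm that by auto
  next
    case False
    have "norm (f - p) \<le> norm (f - 0)" using pm \<open>0 \<in> ?C\<close> by blast
    also have "\<dots> \<le> norm (f - q)" using False norm_triangle_ineq2[of q f] by (simp add: norm_minus_commute)
    finally show ?thesis .
  qed
  have "(f - p) \<bullet> s = 0" if s: "s \<in> span S" for s
  proof (rule ccontr)
    define e where "e = f - p"
    define c where "c = e \<bullet> s"
    assume "(f - p) \<bullet> s \<noteq> 0"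
    then have "c \<noteq> 0" "s \<noteq> 0" by (auto simp: c_def e_def)
    then have ss: "s \<bullet> s > 0" and cc: "c * c > 0" by (auto simp: zero_less_mult_iff)
    define t where "t = c / (s \<bullet> s)"
    have "p + t *\<^sub>R s \<in> span S" using pC s by (simp add: span_add span_scale)
    then have "(norm e)\<^sup>2 \<le> (norm (e - t *\<^sub>R s))\<^sup>2"
      using pmin by (simp add: e_def power_mono algebra_simps)
    also have "\<dots> = e \<bullet> e - 2 * t * c + t * t * (s \<bullet> s)"
      by (simp add: power2_norm_eq_inner c_def inner_diff_left inner_diff_right inner_commute algebra_simps)
    also have "\<dots> = e \<bullet> e - c * c / (s \<bullet> s)"
      using ss by (simp add: t_def field_simps power2_eq_square)
    finally show False using ss cc by (simp add: power2_norm_eq_inner divide_le_0_iff)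
  qed
  then show thesis using that pC by blast
qed

lemma span_insert_orthogonal_decomp:
  fixes a p :: "'a::real_inner"
  assumes p: "p \<in> span S" "\<And>s. s \<in> span S \<Longrightarrow> (a - p) \<bullet> s = 0" and z: "z \<in> span (insert a S)"
  obtains v k where "v \<in> span S" "z = v + k *\<^sub>R (a - p)"
    "(norm z)\<^sup>2 = (norm v)\<^sup>2 + (\<bar>k\<bar> * norm (a - p))\<^sup>2"
proof -
  obtain k where k: "z - k *\<^sub>R a \<in> span S" using z span_breakdown_eq by blast
  define v where "v = z - k *\<^sub>R a + k *\<^sub>R p"
  have "v \<in> span S" unfolding v_def using k p(1) by (simp add: span_add span_scale)
  moreover have zv: "z = v + k *\<^sub>R (a - p)" by (simp add: v_def algebra_simps)
  moreover have "orthogonal v (k *\<^sub>R (a - p))"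
    using p(2) \<open>v \<in> span S\<close> unfolding orthogonal_def by (simp add: inner_commute)
  then have "(norm z)\<^sup>2 = (norm v)\<^sup>2 + (\<bar>k\<bar> * norm (a - p))\<^sup>2"
    using zv norm_add_Pythagorean by fastforce
  ultimately show thesis using that by blast
qed

lemma compact_span_Int_cball:
  fixes S :: "'a::real_inner set"
  assumes "finite S"
  shows "compact (span S \<inter> cball 0 R)"
  using assms
proof (induction S arbitrary: R rule: finite_induct)
  case empty
  have "span {} \<inter> cball 0 R \<subseteq> {0::'a}" by auto
  then show ?case by (meson finite_imp_compact finite.emptyI finite_insert finite_subset)
next
  case (insert a S)
  obtain p where p: "p \<in> span S" "\<And>s. s \<in> span S \<Longrightarrow> (a - p) \<bullet> s = 0"
    using orthogonal_projection_exists[OF insert.IH] by blast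
  define e where "e = a - p"
  show ?case
  proof (cases "e = 0")
    case True
    then have "a \<in> span S" using p e_def by simp
    then show ?thesis using insert.IH span_redundant by metis
  next
    case False
    define Img where "Img = (\<lambda>(c, v). v + c *\<^sub>R e) ` ({-R / norm e..R / norm e} \<times> (span S \<inter> cball 0 R))"
    have cImg: "compact Img" unfolding Img_def
      by (intro compact_continuous_image compact_Times insert.IH compact_Icc)
        (auto intro!: continuous_intros simp: case_prod_unfold)
    have eS: "e \<in> span (insert a S)" unfolding e_def
      using p(1) by (meson span_base insertI1 span_diff span_mono subset_insertI subsetD)
    have "Img \<subseteq> span (insert a S)"
      unfolding Img_def using eS
      by (auto intro!: span_add span_scale simp: span_mono[OF subset_insertI, THEN subsetD])
    moreover have "span (insert a S) \<inter> cball 0 R \<subseteq> Img"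
    proof
      fix z assume z: "z \<in> span (insert a S) \<inter> cball 0 R"
      then obtain v k where v: "v \<in> span S" "z = v + k *\<^sub>R e"
        and pythagoras: "(norm z)\<^sup>2 = (norm v)\<^sup>2 + (\<bar>k\<bar> * norm e)\<^sup>2"
        using span_insert_orthogonal_decomp[OF p] unfolding e_def by blast
      have "(norm z)\<^sup>2 \<le> R\<^sup>2" and R: "0 \<le> R"
        using z norm_ge_zero[of z] by (auto intro: power_mono simp del: norm_ge_zero)
      then have "(norm v)\<^sup>2 \<le> R\<^sup>2" "(\<bar>k\<bar> * norm e)\<^sup>2 \<le> R\<^sup>2"
        using pythagoras zero_le_power2[of "norm v"] zero_le_power2[of "\<bar>k\<bar> * norm e"] by linarith+
      then have "norm v \<le> R" "\<bar>k\<bar> * norm e \<le> R" using power2_le_imp_le R by blast+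
      then have "norm v \<le> R" "\<bar>k\<bar> \<le> R / norm e" using False by (auto simp: field_simps)
      then have "norm v \<le> R" "k \<in> {-R / norm e..R / norm e}" by auto
      then show "z \<in> Img" unfolding Img_def using v
        by (intro image_eqI[of _ _ "(k, v)"]) auto
    qed
    ultimately have "span (insert a S) \<inter> cball 0 R = Img \<inter> cball 0 R" by blast
    then show ?thesis using cImg by (simp add: compact_Int_closed)
  qed
qed

section \<open>One-sided derivatives of a convex function on the real line\<close>

definition slope :: "(real \<Rightarrow> real) \<Rightarrow> real \<Rightarrow> real \<Rightarrow> real" where
  "slope l u w = (l w - l u) / (w - u)"

definition right_deriv :: "(real \<Rightarrow> real) \<Rightarrow> real \<Rightarrow> real" where
  "right_deriv l u = Inf (slope l u ` {u<..})"

definition left_deriv :: "(real \<Rightarrow> real) \<Rightarrow> real \<Rightarrow> real" where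
  "left_deriv l u = Sup (slope l u ` {..<u})"

lemma slope_mono:
  assumes conv: "convex_on UNIV l" and "w1 < w2" "w1 \<noteq> u" "w2 \<noteq> u"
  shows "slope l u w1 \<le> slope l u w2"
proof -
  have sym: "slope l u w = (l u - l w) / (u - w)" for w
    unfolding slope_def by (metis minus_diff_eq minus_divide_divide)
  consider "u < w1" | "w2 < u" | "w1 < u \<and> u < w2" using assms by linarith
  then show ?thesis
  proof cases
    case 1 then show ?thesis using convex_on_slope_le(1)[OF conv, of u w2 w1] assms by (simp add: sym)
  next
    case 2 then show ?thesis using convex_on_slope_le(2)[OF conv, of w1 u w2] assms by (simp add: slope_def)
  next
    case 3
    then have "(l w1 - l u) / (w1 - u) \<le> (l u - l w2) / (u - w2)"
      using convex_on_slope_le[OF conv, of w1 w2 u] by simp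
    then show ?thesis using sym[of w2] unfolding slope_def by linarith
  qed
qed

lemma right_deriv_le_slope:
  assumes conv: "convex_on UNIV l" and "u < w"
  shows "right_deriv l u \<le> slope l u w"
  unfolding right_deriv_def using assms slope_mono[OF conv, of "u - 1" _ u]
  by (intro cInf_lower) (auto simp: bdd_below_def intro!: exI[of _ "slope l u (u - 1)"])

lemma slope_le_left_deriv:
  assumes conv: "convex_on UNIV l" and "w < u"
  shows "slope l u w \<le> left_deriv l u"
  unfolding left_deriv_def using assms slope_mono[OF conv, of _ "u + 1" u]
  by (intro cSup_upper) (auto simp: bdd_above_def intro!: exI[of _ "slope l u (u + 1)"])

lemma left_deriv_le_right_deriv:
  assumes conv: "convex_on UNIV l"
  shows "left_deriv l u \<le> right_deriv l u"
  unfolding left_deriv_def right_deriv_def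
  by (intro cSup_least cInf_greatest) (auto intro: slope_mono[OF conv])

lemma subdiff_if_between_derivs:
  assumes conv: "convex_on UNIV l" and "left_deriv l u \<le> g" "g \<le> right_deriv l u"
  shows "g \<in> subdiff l u"
  unfolding subdiff_def
proof (intro CollectI allI)
  fix w
  consider "w = u" | "u < w" | "w < u" by linarith
  then show "l u + g * (w - u) \<le> l w"
  proof cases
    case 2
    then have "g \<le> (l w - l u) / (w - u)" using right_deriv_le_slope[OF conv 2] assms unfolding slope_def by linarith
    then show ?thesis using 2 by (simp add: field_simps)
  next
    case 3
    then have "(l w - l u) / (w - u) \<le> g" using slope_le_left_deriv[OF conv 3] assms unfolding slope_def by linarith
    then show ?thesis using 3 by (simp add: field_simps)
  qed simp
qed

lemma subdiff_nonneg_if_mono: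
  assumes "mono l" "g \<in> subdiff l u"
  shows "0 \<le> g"
proof -
  have "l u + g * ((u - 1) - u) \<le> l (u - 1)" using assms(2) unfolding subdiff_def by blast
  moreover have "l (u - 1) \<le> l u" using assms(1) by (simp add: monoD)
  ultimately show ?thesis by simp
qed

lemma fenchel_young: "ereal (v * u - l u) \<le> conj_fun l v"
  unfolding conj_fun_def by (rule SUP_upper) auto

lemma conj_fun_subdiff:
  assumes "g \<in> subdiff l u"
  shows "conj_fun l g = ereal (g * u - l u)"
proof (rule antisym)
  show "conj_fun l g \<le> ereal (g * u - l u)"
    unfolding conj_fun_def
  proof (rule SUP_least)
    fix z
    have "l u + g * (z - u) \<le> l z" using assms unfolding subdiff_def by blast
    then show "ereal (g * z - l z) \<le> ereal (g * u - l u)" by (simp add: algebra_simps)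
  qed
qed (rule fenchel_young)

lemma eventually_increment_le_right_deriv:
  assumes conv: "convex_on UNIV l" and "\<epsilon> > 0" "d > 0"
  shows "eventually (\<lambda>t. l (u + t * d) - l u \<le> t * (right_deriv l u * d + \<epsilon>)) (at_right 0)"
proof -
  have "Inf (slope l u ` {u<..}) < right_deriv l u + \<epsilon> / d" using assms by (simp add: right_deriv_def)
  then obtain w where w: "u < w" "slope l u w < right_deriv l u + \<epsilon> / d"
    using cInf_lessD[of "slope l u ` {u<..}"] by auto
  show ?thesis unfolding eventually_at_right_field
  proof (intro exI[of _ "(w - u) / d"] conjI allI impI)
    show "0 < (w - u) / d" using w assms by simp
    fix t assume t: "0 < t" "t < (w - u) / d"
    then have td: "t * d > 0" "u + t * d < w" using assms by (auto simp: field_simps)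
    then have "slope l u (u + t * d) \<le> slope l u w" by (intro slope_mono[OF conv]) (use w in auto)
    then have "slope l u (u + t * d) * (t * d) \<le> (right_deriv l u + \<epsilon> / d) * (t * d)"
      using td w by (intro mult_right_mono) auto
    moreover have "l (u + t * d) - l u = slope l u (u + t * d) * (t * d)"
      using td by (simp add: slope_def)
    moreover have "(right_deriv l u + \<epsilon> / d) * (t * d) = t * (right_deriv l u * d + \<epsilon>)"
      using assms by (simp add: field_simps)
    ultimately show "l (u + t * d) - l u \<le> t * (right_deriv l u * d + \<epsilon>)" by simp
  qed
qed

lemma eventually_increment_le_left_deriv:
  assumes conv: "convex_on UNIV l" and "\<epsilon> > 0" "d < 0"
  shows "eventually (\<lambda>t. l (u + t * d) - l u \<le> t * (left_deriv l u * d + \<epsilon>)) (at_right 0)"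
proof -
  have "left_deriv l u + \<epsilon> / d < Sup (slope l u ` {..<u})"
    using assms by (simp add: left_deriv_def divide_pos_neg)
  then obtain w where w: "w < u" "left_deriv l u + \<epsilon> / d < slope l u w"
    using less_cSupD[of "slope l u ` {..<u}"] by auto
  show ?thesis unfolding eventually_at_right_field
  proof (intro exI[of _ "(w - u) / d"] conjI allI impI)
    show "0 < (w - u) / d" using w assms by (simp add: divide_neg_neg)
    fix t assume t: "0 < t" "t < (w - u) / d"
    have "t * d < 0" using t(1) assms by (simp add: mult_pos_neg)
    moreover have "w < u + t * d" using t assms by (simp add: field_simps)
    ultimately have td: "t * d < 0" "w < u + t * d" by auto
    then have "slope l u w \<le> slope l u (u + t * d)" by (intro slope_mono[OF conv]) (use w in auto)
    then have "slope l u (u + t * d) * (t * d) \<le> (left_deriv l u + \<epsilon> / d) * (t * d)"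
      using td w by (intro mult_right_mono_neg) auto
    moreover have "l (u + t * d) - l u = slope l u (u + t * d) * (t * d)"
      using td by (simp add: slope_def)
    moreover have "(left_deriv l u + \<epsilon> / d) * (t * d) = t * (left_deriv l u * d + \<epsilon>)"
      using assms by (simp add: field_simps)
    ultimately show "l (u + t * d) - l u \<le> t * (left_deriv l u * d + \<epsilon>)" by simp
  qed
qed

lemma eventually_increment_le_directional_deriv:
  assumes conv: "convex_on UNIV l" and "\<epsilon> > 0"
  shows "eventually (\<lambda>t. l (u + t * d) - l u
           \<le> t * ((if 0 \<le> d then right_deriv l u else left_deriv l u) * d + \<epsilon>)) (at_right 0)"
proof -
  consider "d = 0" | "d > 0" | "d < 0" by linarith
  then show ?thesis
  proof cases
    case 1 then show ?thesis using assms by (auto simp: eventually_at_right_field intro!: exI[of _ 1])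
  qed (use eventually_increment_le_right_deriv[OF assms] eventually_increment_le_left_deriv[OF assms] in auto)
qed

lemma linear_minorant_if_subdiff_unbounded:
  assumes conv: "convex_on UNIV l" and nonneg: "\<And>z. l z \<ge> 0"
    and unbounded: "\<forall>M>0. \<exists>z0. \<forall>z\<ge>z0. \<forall>g\<in>subdiff l z. g \<ge> M" and "M > 0"
  obtains z0 where "\<And>u. M * (u - z0) \<le> l u"
proof -
  obtain z0 where z0: "\<forall>z\<ge>z0. \<forall>g\<in>subdiff l z. g \<ge> M" using unbounded \<open>M > 0\<close> by blast
  have sub: "right_deriv l z0 \<in> subdiff l z0"
    using subdiff_if_between_derivs[OF conv left_deriv_le_right_deriv[OF conv]] by simp
  then have "M \<le> right_deriv l z0" using z0 by auto
  have "M * (u - z0) \<le> l u" for u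
  proof (cases "u \<ge> z0")
    case True
    then have "M * (u - z0) \<le> right_deriv l z0 * (u - z0)"
      using \<open>M \<le> right_deriv l z0\<close> by (simp add: mult_right_mono)
    also have "\<dots> \<le> l u - l z0" using sub unfolding subdiff_def by (simp add: algebra_simps)
    finally show ?thesis using nonneg[of z0] by simp
  next
    case False
    then have "M * (u - z0) \<le> 0" using \<open>M > 0\<close> by (intro less_imp_le mult_pos_neg) auto
    then show ?thesis using nonneg[of u] by linarith
  qed
  then show thesis using that by blast
qed

section \<open>Existence of a primal minimiser\<close>

lemma primal_obj_cong_orthogonal:
  assumes "\<And>i. i \<in> {1..m} \<Longrightarrow> (f - p) \<bullet> \<phi> (x i) = 0"
  shows "primal_obj l m \<phi> x y p b \<rho> = primal_obj l m \<phi> x y f b \<rho>"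
  unfolding primal_obj_def using assms by (auto simp: inner_diff_left intro!: sum.cong arg_cong[where f = l])

lemma primal_level_set_bounded:
  fixes \<phi> :: "'a \<Rightarrow> 'h::real_inner"
  assumes nonneg: "\<And>z. l z \<ge> 0" and growth: "\<And>u. 2 * real m * (u - z0) \<le> l u"
    and ip: "ip \<in> {1..m}" "y ip = 1" and jn: "jn \<in> {1..m}" "y jn = -1"
    and f: "norm f \<le> lam" and below: "primal_obj l m \<phi> x y f b \<rho> \<le> c"
  defines "B \<equiv> lam * (\<Sum>i=1..m. norm (\<phi> (x i)))"
  shows "\<bar>\<rho>\<bar> \<le> \<bar>c\<bar> + 4 * B + 4 * \<bar>z0\<bar> + 1 \<and> \<bar>b\<bar> \<le> \<bar>c\<bar> + 4 * B + 4 * \<bar>z0\<bar> + 1"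
proof -
  have m: "real m > 0" using ip by auto
  have inner_bound: "\<bar>f \<bullet> \<phi> (x i)\<bar> \<le> B" if "i \<in> {1..m}" for i
  proof -
    have "\<bar>f \<bullet> \<phi> (x i)\<bar> \<le> lam * norm (\<phi> (x i))"
      using Cauchy_Schwarz_ineq2[of f] f by (meson mult_right_mono norm_ge_zero order_trans)
    also have "\<dots> \<le> B" unfolding B_def using f that
      by (intro mult_left_mono member_le_sum) (auto intro: order_trans[OF norm_ge_zero])
    finally show ?thesis .
  qed
  define L where "L i = l (\<rho> - y i * (f \<bullet> \<phi> (x i) + b))" for i
  define S where "S = (\<Sum>i=1..m. L i) / real m"
  define A where "A = \<rho> - f \<bullet> \<phi> (x ip) - b - z0"
  define A' where "A' = \<rho> + f \<bullet> \<phi> (x jn) + b - z0"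
  have L_nonneg: "L i \<ge> 0" for i using nonneg by (simp add: L_def)
  have "(\<Sum>i\<in>{ip, jn}. L i) \<le> (\<Sum>i=1..m. L i)"
    by (rule sum_mono2) (use ip jn L_nonneg in auto)
  moreover have "ip \<noteq> jn" using ip jn by auto
  ultimately have "L ip + L jn \<le> real m * S" using m by (simp add: S_def)
  moreover have "2 * real m * A \<le> L ip"
    using growth[of "\<rho> - f \<bullet> \<phi> (x ip) - b"] ip by (simp add: L_def A_def algebra_simps)
  moreover have "2 * real m * A' \<le> L jn"
    using growth[of "\<rho> + f \<bullet> \<phi> (x jn) + b"] jn by (simp add: L_def A'_def algebra_simps)
  ultimately have "real m * (2 * A + 2 * A') \<le> real m * S" "real m * (2 * A) \<le> real m * S"
    "real m * (2 * A') \<le> real m * S"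
    using L_nonneg[of ip] L_nonneg[of jn] by (simp_all add: algebra_simps)
  then have "2 * A + 2 * A' \<le> S" "2 * A \<le> S" "2 * A' \<le> S"
    using m by (simp_all only: mult_le_cancel_left_pos)
  moreover have "0 \<le> S" using L_nonneg m by (simp add: S_def sum_nonneg)
  moreover have "-2 * \<rho> + S \<le> c" using below by (simp add: primal_obj_def S_def L_def)
  moreover have "B \<ge> 0" using inner_bound[OF ip(1)] by linarith
  ultimately show ?thesis using inner_bound[OF ip(1)] inner_bound[OF jn(1)]
    unfolding A_def A'_def by (simp add: abs_le_iff) linarith
qed

lemma primal_minimizer_exists:
  fixes \<phi> :: "'a \<Rightarrow> 'h::real_inner"
  assumes conv: "convex_on UNIV l" and nonneg: "\<And>z. l z \<ge> 0"
    and growth: "\<And>M. M > 0 \<Longrightarrow> \<exists>z0. \<forall>u. M * (u - z0) \<le> l u"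
    and ip: "ip \<in> {1..m}" "y ip = 1" and jn: "jn \<in> {1..m}" "y jn = -1" and lam: "lam \<ge> 0"
  obtains f b \<rho> where "norm f \<le> lam"
    "\<And>f' b' \<rho>'. norm f' \<le> lam \<Longrightarrow> primal_obj l m \<phi> x y f b \<rho> \<le> primal_obj l m \<phi> x y f' b' \<rho>'"
proof -
  let ?F = "primal_obj l m \<phi> x y"
  define \<Psi> where "\<Psi> = (\<lambda>i. \<phi> (x i)) ` {1..m}"
  have m: "real m > 0" using ip by auto
  then obtain z0 where z0: "\<And>u. 2 * real m * (u - z0) \<le> l u" using growth[of "2 * real m"] by auto
  define c0 where "c0 = ?F 0 0 0"
  define R where "R = \<bar>c0\<bar> + 4 * (lam * (\<Sum>i=1..m. norm (\<phi> (x i)))) + 4 * \<bar>z0\<bar> + 1"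
  have bounded: "\<bar>\<rho>\<bar> \<le> R \<and> \<bar>b\<bar> \<le> R" if "norm f \<le> lam" "?F f b \<rho> \<le> c0" for f b \<rho>
    unfolding R_def by (rule primal_level_set_bounded[OF nonneg z0 ip jn that])
  text \<open>The minimum is searched on a compact set: besides bounding \<open>\<rho>\<close> and \<open>b\<close>, \<open>f\<close> may be
    replaced by its projection onto the span of the finitely many features.\<close>
  define C where "C = {-R..R} \<times> {-R..R} \<times> (span \<Psi> \<inter> cball 0 lam)"
  have "compact C" unfolding C_def
    by (intro compact_Times compact_Icc compact_span_Int_cball) (simp add: \<Psi>_def)
  moreover have zero_C: "(0, 0, 0) \<in> C" unfolding C_def using bounded[of 0 0 0] lam
    by (auto simp: span_zero c0_def)
  moreover have "continuous_on C (\<lambda>(\<rho>, b, f). ?F f b \<rho>)"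
    using convex_on_continuous[OF open_UNIV conv] m
    by (auto simp: primal_obj_def case_prod_unfold intro!: continuous_intros
        intro: continuous_on_compose2[of UNIV l])
  ultimately obtain \<rho>s bs fs where min: "(\<rho>s, bs, fs) \<in> C"
    "\<And>z. z \<in> C \<Longrightarrow> ?F fs bs \<rho>s \<le> (\<lambda>(\<rho>, b, f). ?F f b \<rho>) z"
    using continuous_attains_inf[of C] by fastforce
  have "?F fs bs \<rho>s \<le> ?F f' b' \<rho>'" if f': "norm f' \<le> lam" for f' b' \<rho>'
  proof -
    obtain p where p: "p \<in> span \<Psi>" "\<And>s. s \<in> span \<Psi> \<Longrightarrow> (f' - p) \<bullet> s = 0"
      using orthogonal_projection_exists[OF compact_span_Int_cball, of \<Psi> f'] by (auto simp: \<Psi>_def)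
    have "?F p b' \<rho>' = ?F f' b' \<rho>'"
      by (rule primal_obj_cong_orthogonal) (simp add: p(2) \<Psi>_def span_base)
    moreover have "norm p \<le> lam"
    proof -
      have "orthogonal p (f' - p)" using p unfolding orthogonal_def by (simp add: inner_commute)
      then have "(norm f')\<^sup>2 = (norm p)\<^sup>2 + (norm (f' - p))\<^sup>2" using norm_add_Pythagorean by fastforce
      then have "(norm p)\<^sup>2 \<le> (norm f')\<^sup>2" using zero_le_power2[of "norm (f' - p)"] by linarith
      then have "norm p \<le> norm f'" using power2_le_imp_le norm_ge_zero by blast
      then show ?thesis using f' by linarith
    qed
    moreover have "?F fs bs \<rho>s \<le> c0" using min(2)[OF zero_C] by (simp add: c0_def)
    ultimately show ?thesis
      using min(2)[of "(\<rho>', b', p)"] bounded[of p b' \<rho>'] p(1) by (fastforce simp: C_def abs_le_iff)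
  qed
  moreover have "norm fs \<le> lam" using min(1) by (simp add: C_def)
  ultimately show thesis using that by blast
qed

section \<open>Optimality conditions\<close>

definition zonotope :: "'i set \<Rightarrow> ('i \<Rightarrow> 'a::real_vector) \<Rightarrow> ('i \<Rightarrow> real) \<Rightarrow> ('i \<Rightarrow> real) \<Rightarrow> 'a set" where
  "zonotope I w a b = {\<Sum>i\<in>I. g i *\<^sub>R w i | g. \<forall>i\<in>I. a i \<le> g i \<and> g i \<le> b i}"

lemma zonotope_insert:
  assumes "finite I" "j \<notin> I"
  shows "zonotope (insert j I) w a b = (\<lambda>(c, v). c *\<^sub>R w j + v) ` ({a j..b j} \<times> zonotope I w a b)"
proof (intro equalityI subsetI)
  fix z assume "z \<in> zonotope (insert j I) w a b"
  then obtain g where "z = (\<Sum>i\<in>insert j I. g i *\<^sub>R w i)" "\<forall>i\<in>insert j I. a i \<le> g i \<and> g i \<le> b i"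
    by (auto simp: zonotope_def)
  then show "z \<in> (\<lambda>(c, v). c *\<^sub>R w j + v) ` ({a j..b j} \<times> zonotope I w a b)"
    using assms by (auto simp: zonotope_def intro!: image_eqI[of _ _ "(g j, \<Sum>i\<in>I. g i *\<^sub>R w i)"])
next
  fix z assume "z \<in> (\<lambda>(c, v). c *\<^sub>R w j + v) ` ({a j..b j} \<times> zonotope I w a b)"
  then obtain c g where z: "z = c *\<^sub>R w j + (\<Sum>i\<in>I. g i *\<^sub>R w i)" "a j \<le> c" "c \<le> b j"
    "\<forall>i\<in>I. a i \<le> g i \<and> g i \<le> b i" by (auto simp: zonotope_def)
  have "(\<Sum>i\<in>I. (g(j := c)) i *\<^sub>R w i) = (\<Sum>i\<in>I. g i *\<^sub>R w i)"
    using assms by (intro sum.cong) auto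
  then have "z = (\<Sum>i\<in>insert j I. (g(j := c)) i *\<^sub>R w i)" using z assms by simp
  moreover have "\<forall>i\<in>insert j I. a i \<le> (g(j := c)) i \<and> (g(j := c)) i \<le> b i" using z by auto
  ultimately show "z \<in> zonotope (insert j I) w a b" unfolding zonotope_def by blast
qed

lemma compact_zonotope:
  fixes w :: "'i \<Rightarrow> 'a::real_normed_vector"
  assumes "finite I"
  shows "compact (zonotope I w a b)"
  using assms
proof (induction I rule: finite_induct)
  case empty then show ?case by (simp add: zonotope_def)
next
  case (insert j I)
  then show ?case unfolding zonotope_insert[OF insert(1,2)]
    by (intro compact_continuous_image compact_Times compact_Icc)
      (auto intro!: continuous_intros simp: case_prod_unfold)
qed

lemma convex_zonotope: "convex (zonotope I w a b)"
  unfolding convex_def zonotope_def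
proof (clarify, intro exI conjI ballI)
  fix u v :: real and g1 g2
  assume uv: "0 \<le> u" "0 \<le> v" "u + v = 1"
    and g: "\<forall>i\<in>I. a i \<le> g1 i \<and> g1 i \<le> b i" "\<forall>i\<in>I. a i \<le> g2 i \<and> g2 i \<le> b i"
  show "u *\<^sub>R (\<Sum>i\<in>I. g1 i *\<^sub>R w i) + v *\<^sub>R (\<Sum>i\<in>I. g2 i *\<^sub>R w i)
      = (\<Sum>i\<in>I. (u * g1 i + v * g2 i) *\<^sub>R w i)"
    by (simp add: scaleR_sum_right sum.distrib scaleR_add_left)
  fix i assume "i \<in> I"
  then have "u * a i + v * a i \<le> u * g1 i + v * g2 i" "u * g1 i + v * g2 i \<le> u * b i + v * b i"
    using g uv by (auto intro!: add_mono mult_left_mono)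
  then show "a i \<le> u * g1 i + v * g2 i" "u * g1 i + v * g2 i \<le> b i"
    using uv by (metis distrib_right mult_1)+
qed

lemma norm_sum_le_box:
  assumes "\<forall>i\<in>I. a i \<le> g i \<and> g i \<le> b i"
  shows "norm (\<Sum>i\<in>I. g i *\<^sub>R v i) \<le> (\<Sum>i\<in>I. (\<bar>a i\<bar> + \<bar>b i\<bar>) * norm (v i))"
proof -
  have "norm (\<Sum>i\<in>I. g i *\<^sub>R v i) \<le> (\<Sum>i\<in>I. norm (g i *\<^sub>R v i))"
    by (rule norm_sum)
  also have "\<dots> = (\<Sum>i\<in>I. \<bar>g i\<bar> * norm (v i))" by simp
  also have "\<dots> \<le> (\<Sum>i\<in>I. (\<bar>a i\<bar> + \<bar>b i\<bar>) * norm (v i))"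
    using assms by (intro sum_mono mult_right_mono) auto
  finally show ?thesis .
qed

lemma eventually_norm_add_scaleR_le:
  fixes f d :: "'a::real_inner"
  assumes "norm f \<le> r" and boundary: "norm f = r \<Longrightarrow> f \<bullet> d < 0"
  shows "eventually (\<lambda>t. norm (f + t *\<^sub>R d) \<le> r) (at_right 0)"
proof (cases "norm f = r")
  case False
  then have "norm f < r" using assms(1) by simp
  then have "0 < (r - norm f) / (norm d + 1)" by (intro divide_pos_pos) (simp_all add: add_nonneg_pos)
  then show ?thesis unfolding eventually_at_right_field
  proof (intro exI conjI allI impI)
    fix t :: real assume t: "0 < t" "t < (r - norm f) / (norm d + 1)"
    then have "t * norm d \<le> r - norm f"
      by (smt (verit, best) mult_left_mono norm_ge_zero pos_less_divide_eq zero_less_norm_iff)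
    then show "norm (f + t *\<^sub>R d) \<le> r" using norm_triangle_ineq[of f "t *\<^sub>R d"] t(1) by simp
  qed
next
  case True
  then have c: "f \<bullet> d < 0" by (rule boundary)
  have dd: "d \<bullet> d + 1 > 0" using inner_ge_zero[of d] by linarith
  show ?thesis unfolding eventually_at_right_field
  proof (intro exI[of _ "- 2 * (f \<bullet> d) / (d \<bullet> d + 1)"] conjI allI impI)
    show "0 < - 2 * (f \<bullet> d) / (d \<bullet> d + 1)" using c dd by (intro divide_pos_pos) auto
    fix t :: real assume t: "0 < t" "t < - 2 * (f \<bullet> d) / (d \<bullet> d + 1)"
    then have "t * (d \<bullet> d) < - 2 * (f \<bullet> d)"
      using dd by (simp add: field_simps)
    then have "t * (2 * (f \<bullet> d) + t * (d \<bullet> d)) < 0" using t(1) by (simp add: mult_pos_neg)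
    moreover have "(norm (f + t *\<^sub>R d))\<^sup>2 = (norm f)\<^sup>2 + t * (2 * (f \<bullet> d) + t * (d \<bullet> d))"
      by (simp add: power2_norm_eq_inner inner_add_left inner_add_right inner_commute algebra_simps)
    ultimately have "(norm (f + t *\<^sub>R d))\<^sup>2 \<le> r\<^sup>2" using True by simp
    then show "norm (f + t *\<^sub>R d) \<le> r" using True power2_le_imp_le by fastforce
  qed
qed

lemma primal_directional_deriv_nonneg:
  fixes \<phi> :: "'a \<Rightarrow> 'h::real_inner" and df :: 'h and d\<rho> db :: real
  assumes conv: "convex_on UNIV l" and m: "m > 0"
    and opt: "\<And>f b \<rho>. norm f \<le> lam \<Longrightarrow> primal_obj l m \<phi> x y fs bs \<rho>s \<le> primal_obj l m \<phi> x y f b \<rho>"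
    and feasible: "eventually (\<lambda>t. norm (fs + t *\<^sub>R df) \<le> lam) (at_right 0)"
  defines "u i \<equiv> \<rho>s - y i * (fs \<bullet> \<phi> (x i) + bs)" and "du i \<equiv> d\<rho> - y i * (df \<bullet> \<phi> (x i) + db)"
  shows "0 \<le> -2 * d\<rho> + (1 / real m) *
    (\<Sum>i=1..m. (if 0 \<le> du i then right_deriv l (u i) else left_deriv l (u i)) * du i)"
    (is "0 \<le> ?D")
proof (rule ccontr)
  let ?F = "primal_obj l m \<phi> x y"
  let ?g = "\<lambda>i. if 0 \<le> du i then right_deriv l (u i) else left_deriv l (u i)"
  assume "\<not> 0 \<le> ?D"
  define \<epsilon> where "\<epsilon> = - ?D / 2"
  have \<epsilon>: "\<epsilon> > 0" using \<open>\<not> 0 \<le> ?D\<close> by (simp add: \<epsilon>_def)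
  have "eventually (\<lambda>t. \<forall>i\<in>{1..m}. l (u i + t * du i) - l (u i) \<le> t * (?g i * du i + \<epsilon>)) (at_right 0)"
    by (intro eventually_ball_finite ballI eventually_increment_le_directional_deriv[OF conv \<epsilon>]) auto
  from eventually_conj[OF this feasible] obtain B where "B > 0" and B: "\<forall>t>0. t < B \<longrightarrow>
      (\<forall>i\<in>{1..m}. l (u i + t * du i) - l (u i) \<le> t * (?g i * du i + \<epsilon>)) \<and> norm (fs + t *\<^sub>R df) \<le> lam"
    unfolding eventually_at_right_field by blast
  then obtain t where t: "0 < t" "\<forall>i\<in>{1..m}. l (u i + t * du i) - l (u i) \<le> t * (?g i * du i + \<epsilon>)"
    "norm (fs + t *\<^sub>R df) \<le> lam"
    using B[rule_format, of "B / 2"] \<open>B > 0\<close> by (metis half_gt_zero less_add_same_cancel2 field_sum_of_halves)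
  have "?F (fs + t *\<^sub>R df) (bs + t * db) (\<rho>s + t * d\<rho>) - ?F fs bs \<rho>s
      = -2 * t * d\<rho> + (1 / real m) * (\<Sum>i=1..m. l (u i + t * du i) - l (u i))"
    by (simp add: primal_obj_def u_def du_def inner_add_left sum_subtractf algebra_simps)
  also have "\<dots> \<le> -2 * t * d\<rho> + (1 / real m) * (\<Sum>i=1..m. t * (?g i * du i + \<epsilon>))"
    using t(2) by (intro add_left_mono mult_left_mono sum_mono) auto
  also have "\<dots> = t * (?D + \<epsilon>)"
    using m by (simp add: sum.distrib sum_distrib_left field_simps)
  also have "\<dots> < 0"
  proof -
    have half: "\<And>z::real. z < 0 \<Longrightarrow> z + - z / 2 < 0" by linarith
    have "?D < 0" using \<open>\<not> 0 \<le> ?D\<close> by (simp only: not_le)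
    then have "?D + \<epsilon> < 0" unfolding \<epsilon>_def by (rule half)
    then show ?thesis by (rule mult_pos_neg[OF t(1)])
  qed
  finally show False using opt[OF t(3), of "bs + t * db" "\<rho>s + t * d\<rho>"] by simp
qed

text \<open>The residuals of the KKT system over all admissible multipliers: \<open>g i\<close> ranges over the
  subdifferential of \<open>l\<close> at the residual \<open>u i\<close>, and \<open>s\<close> is the multiplier of the norm constraint,
  a priori bounded by \<open>S\<close>.\<close>
definition kkt_residuals :: "(real \<Rightarrow> real) \<Rightarrow> nat \<Rightarrow> ('a \<Rightarrow> 'h::real_vector) \<Rightarrow> (nat \<Rightarrow> 'a) \<Rightarrow>
    (nat \<Rightarrow> real) \<Rightarrow> (nat \<Rightarrow> real) \<Rightarrow> 'h \<Rightarrow> real \<Rightarrow> (real \<times> real \<times> 'h) set" where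
  "kkt_residuals l m \<phi> x y u f S =
    {(sum g {1..m} - 2 * real m, \<Sum>i=1..m. g i * y i, (\<Sum>i=1..m. (g i * y i) *\<^sub>R \<phi> (x i)) - s *\<^sub>R f) | g s.
       (\<forall>i\<in>{1..m}. left_deriv l (u i) \<le> g i \<and> g i \<le> right_deriv l (u i)) \<and> 0 \<le> s \<and> s \<le> S}"

lemma kkt_residuals_eq_image:
  "kkt_residuals l m \<phi> x y u f S =
     (\<lambda>(z, s). z + (- 2 * real m, 0, - s *\<^sub>R f)) `
       (zonotope {1..m} (\<lambda>i. (1, y i, y i *\<^sub>R \<phi> (x i))) (\<lambda>i. left_deriv l (u i)) (\<lambda>i. right_deriv l (u i))
        \<times> {0..S})"
proof -
  have sum_triple: "(\<Sum>i\<in>I. (g i, g i * y i, (g i * y i) *\<^sub>R \<phi> (x i)))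
      = (sum g I, \<Sum>i\<in>I. g i * y i, \<Sum>i\<in>I. (g i * y i) *\<^sub>R \<phi> (x i))" for g I
    by (simp add: prod_eq_iff fst_sum snd_sum)
  let ?w = "\<lambda>i. (1, y i, y i *\<^sub>R \<phi> (x i))"
  let ?box = "\<lambda>g. \<forall>i\<in>{1..m}. left_deriv l (u i) \<le> g i \<and> g i \<le> right_deriv l (u i)"
  show ?thesis
  proof (intro equalityI subsetI)
    fix r assume "r \<in> kkt_residuals l m \<phi> x y u f S"
    then obtain g s where "r = (sum g {1..m} - 2 * real m, \<Sum>i=1..m. g i * y i,
        (\<Sum>i=1..m. (g i * y i) *\<^sub>R \<phi> (x i)) - s *\<^sub>R f)" "?box g" "0 \<le> s" "s \<le> S"
      unfolding kkt_residuals_def by blast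
    then show "r \<in> (\<lambda>(z, s). z + (- 2 * real m, 0, - s *\<^sub>R f)) `
        (zonotope {1..m} ?w (\<lambda>i. left_deriv l (u i)) (\<lambda>i. right_deriv l (u i)) \<times> {0..S})"
      by (intro image_eqI[of _ _ "(\<Sum>i=1..m. g i *\<^sub>R ?w i, s)"]) (auto simp: sum_triple zonotope_def)
  next
    fix r assume "r \<in> (\<lambda>(z, s). z + (- 2 * real m, 0, - s *\<^sub>R f)) `
        (zonotope {1..m} ?w (\<lambda>i. left_deriv l (u i)) (\<lambda>i. right_deriv l (u i)) \<times> {0..S})"
    then obtain g s where "r = (\<Sum>i=1..m. g i *\<^sub>R ?w i) + (- 2 * real m, 0, - s *\<^sub>R f)"
      "?box g" "0 \<le> s" "s \<le> S"
      unfolding zonotope_def by auto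
    then show "r \<in> kkt_residuals l m \<phi> x y u f S"
      unfolding kkt_residuals_def by (auto simp: sum_triple)
  qed
qed

lemma compact_kkt_residuals:
  fixes \<phi> :: "'a \<Rightarrow> 'h::real_normed_vector"
  shows "compact (kkt_residuals l m \<phi> x y u f S)"
  unfolding kkt_residuals_eq_image
  by (intro compact_continuous_image compact_Times compact_zonotope compact_Icc)
    (auto intro!: continuous_intros simp: case_prod_unfold)

lemma convex_kkt_residuals: "convex (kkt_residuals l m \<phi> x y u f S)"
proof -
  have "linear (\<lambda>(z, s). z + s *\<^sub>R (0::real, 0::real, - f))"
    by (rule linearI) (auto simp: algebra_simps)
  then have "convex ((+) (- 2 * real m, 0, 0) ` (\<lambda>(z, s). z + s *\<^sub>R (0, 0, - f)) `
      (zonotope {1..m} (\<lambda>i. (1, y i, y i *\<^sub>R \<phi> (x i))) (\<lambda>i. left_deriv l (u i)) (\<lambda>i. right_deriv l (u i))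
        \<times> {0..S}))"
    by (intro convex_translation convex_linear_image convex_Times convex_zonotope convex_real_interval)
  then show ?thesis
    unfolding kkt_residuals_eq_image image_image by (simp add: case_prod_unfold algebra_simps)
qed

lemma kkt_multipliers_if_zero_residual:
  assumes "0 \<in> kkt_residuals l m \<phi> x y u f S" and "norm f = lam \<or> S = 0"
  obtains g where "\<forall>i\<in>{1..m}. left_deriv l (u i) \<le> g i \<and> g i \<le> right_deriv l (u i)"
    "(\<Sum>i=1..m. g i) = 2 * real m" "(\<Sum>i=1..m. g i * y i) = 0"
    "f \<bullet> (\<Sum>i=1..m. (g i * y i) *\<^sub>R \<phi> (x i)) = lam * norm (\<Sum>i=1..m. (g i * y i) *\<^sub>R \<phi> (x i))"
proof -
  obtain g s where g: "\<forall>i\<in>{1..m}. left_deriv l (u i) \<le> g i \<and> g i \<le> right_deriv l (u i)"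
    and "0 \<le> s" "s \<le> S" and sums: "(\<Sum>i=1..m. g i) = 2 * real m" "(\<Sum>i=1..m. g i * y i) = 0"
    and C: "(\<Sum>i=1..m. (g i * y i) *\<^sub>R \<phi> (x i)) = s *\<^sub>R f"
    using assms(1) unfolding kkt_residuals_def by (auto simp: prod_eq_iff)
  have "f \<bullet> (s *\<^sub>R f) = lam * norm (s *\<^sub>R f)"
    using assms(2) \<open>0 \<le> s\<close> \<open>s \<le> S\<close> by (auto simp: power2_norm_eq_inner[symmetric] power2_eq_square)
  then show thesis using that g sums C by simp
qed

lemma separated_kkt_residuals_not_minimal:
  fixes \<phi> :: "'a \<Rightarrow> 'h::real_inner" and fs :: 'h and bs \<rho>s :: real
  assumes conv: "convex_on UNIV l" and m: "m > 0" and lam: "lam > 0" and fs: "norm fs \<le> lam"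
    and opt: "\<And>f b \<rho>. norm f \<le> lam \<Longrightarrow> primal_obj l m \<phi> x y fs bs \<rho>s \<le> primal_obj l m \<phi> x y f b \<rho>"
  defines "u i \<equiv> \<rho>s - y i * (fs \<bullet> \<phi> (x i) + bs)"
  assumes S: "S \<ge> 0" "norm fs \<noteq> lam \<Longrightarrow> S = 0"
    and C_bound: "\<And>g. \<forall>i\<in>{1..m}. left_deriv l (u i) \<le> g i \<and> g i \<le> right_deriv l (u i) \<Longrightarrow>
      norm fs = lam \<Longrightarrow> fs \<bullet> (\<Sum>i=1..m. (g i * y i) *\<^sub>R \<phi> (x i)) \<le> lam\<^sup>2 * S"
    and "P > 0"
    and separation: "\<And>g s. \<forall>i\<in>{1..m}. left_deriv l (u i) \<le> g i \<and> g i \<le> right_deriv l (u i) \<Longrightarrow>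
      0 \<le> s \<Longrightarrow> s \<le> S \<Longrightarrow> P + s * (pc \<bullet> fs)
        \<le> pa * (sum g {1..m} - 2 * real m) + pb * (\<Sum>i=1..m. g i * y i) + pc \<bullet> (\<Sum>i=1..m. (g i * y i) *\<^sub>R \<phi> (x i))"
  shows False
proof -
  let ?C = "\<lambda>g. \<Sum>i=1..m. (g i * y i) *\<^sub>R \<phi> (x i)"
  let ?X = "\<lambda>g. pa * (sum g {1..m} - 2 * real m) + pb * (\<Sum>i=1..m. g i * y i) + pc \<bullet> ?C g"
  text \<open>The direction \<open>(- pa, pb, pc)\<close> decreases the objective; on the boundary of the ball it is
    tilted inwards by \<open>\<kappa>\<close>, with \<open>\<delta>\<close> small enough not to destroy the descent.\<close>
  define \<delta> where "\<delta> = P / (2 * (lam\<^sup>2 * S + 1))"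
  define M0 where "M0 = max 0 (pc \<bullet> fs)"
  define \<kappa> where "\<kappa> = (if norm fs = lam then M0 / lam\<^sup>2 + \<delta> else 0)"
  define df where "df = pc - \<kappa> *\<^sub>R fs"
  define du where "du i = - pa - y i * (df \<bullet> \<phi> (x i) + pb)" for i
  define gs where "gs i = (if 0 \<le> du i then right_deriv l (u i) else left_deriv l (u i))" for i
  have "lam\<^sup>2 * S \<ge> 0" using S by simp
  then have "\<delta> > 0" using \<open>P > 0\<close> by (simp add: \<delta>_def)
  have "\<delta> * (lam\<^sup>2 * S) \<le> \<delta> * (lam\<^sup>2 * S + 1)" using \<open>\<delta> > 0\<close> by simp
  also have "\<dots> = P / 2" using \<open>lam\<^sup>2 * S \<ge> 0\<close> by (simp add: \<delta>_def field_simps)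
  finally have "\<delta> * (lam\<^sup>2 * S) \<le> P / 2" .
  have \<kappa>_eq: "\<kappa> * (lam\<^sup>2 * S) = S * M0 + \<delta> * (lam\<^sup>2 * S)"
  proof (cases "norm fs = lam")
    case True then show ?thesis using lam by (simp add: \<kappa>_def field_simps)
  qed (simp add: \<kappa>_def S(2))
  have gs: "\<forall>i\<in>{1..m}. left_deriv l (u i) \<le> gs i \<and> gs i \<le> right_deriv l (u i)"
    using left_deriv_le_right_deriv[OF conv] by (simp add: gs_def)
  have "real m * (-2 * (- pa) + (1 / real m) * (\<Sum>i=1..m. gs i * du i)) = - ?X gs + \<kappa> * (fs \<bullet> ?C gs)"
    using m by (simp add: du_def df_def inner_sum_right inner_diff_left sum_subtractf sum_distrib_left
        sum.distrib field_simps)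
  also have "\<dots> \<le> - (P + S * M0) + \<kappa> * (lam\<^sup>2 * S)"
  proof (intro add_mono)
    have "P + (if pc \<bullet> fs > 0 then S else 0) * (pc \<bullet> fs) \<le> ?X gs"
      using separation[OF gs] S by simp
    then show "- ?X gs \<le> - (P + S * M0)"
      by (auto simp: M0_def split: if_splits)
    show "\<kappa> * (fs \<bullet> ?C gs) \<le> \<kappa> * (lam\<^sup>2 * S)"
    proof (cases "norm fs = lam")
      case True
      then have "\<kappa> \<ge> 0" using \<open>\<delta> > 0\<close> by (simp add: \<kappa>_def M0_def)
      then show ?thesis using C_bound[OF gs True] by (simp add: mult_left_mono)
    qed (simp add: \<kappa>_def)
  qed
  also have "\<dots> \<le> - P / 2"
    using \<kappa>_eq \<open>\<delta> * (lam\<^sup>2 * S) \<le> P / 2\<close> by linarith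
  finally have "real m * (-2 * (- pa) + (1 / real m) * (\<Sum>i=1..m. gs i * du i)) < 0"
    using \<open>P > 0\<close> by linarith
  then have descent: "-2 * (- pa) + (1 / real m) * (\<Sum>i=1..m. gs i * du i) < 0"
    using m by (simp add: mult_less_0_iff)
  have feasible: "eventually (\<lambda>t. norm (fs + t *\<^sub>R df) \<le> lam) (at_right 0)"
  proof (rule eventually_norm_add_scaleR_le[OF fs])
    assume "norm fs = lam"
    then have "fs \<bullet> df = pc \<bullet> fs - M0 - \<delta> * lam\<^sup>2"
      using lam by (simp add: df_def \<kappa>_def inner_diff_right power2_norm_eq_inner[symmetric]
          inner_commute field_simps)
    moreover have "\<delta> * lam\<^sup>2 > 0" using \<open>\<delta> > 0\<close> lam by simp
    ultimately show "fs \<bullet> df < 0" unfolding M0_def by linarith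
  qed
  show False
    using primal_directional_deriv_nonneg[OF conv m opt feasible, where d\<rho> = "- pa" and db = pb] descent
    unfolding u_def du_def gs_def by simp
qed

lemma zero_kkt_residual_at_minimizer:
  fixes \<phi> :: "'a \<Rightarrow> 'h::real_inner" and fs :: 'h and bs \<rho>s :: real
  assumes conv: "convex_on UNIV l" and m: "m > 0" and lam: "lam > 0" and fs: "norm fs \<le> lam"
    and opt: "\<And>f b \<rho>. norm f \<le> lam \<Longrightarrow> primal_obj l m \<phi> x y fs bs \<rho>s \<le> primal_obj l m \<phi> x y f b \<rho>"
  defines "u i \<equiv> \<rho>s - y i * (fs \<bullet> \<phi> (x i) + bs)"
  obtains S where "norm fs = lam \<or> S = 0" "0 \<in> kkt_residuals l m \<phi> x y u fs S"
proof -
  let ?C = "\<lambda>g. \<Sum>i=1..m. (g i * y i) *\<^sub>R \<phi> (x i)"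
  let ?box = "\<lambda>g. \<forall>i\<in>{1..m}. left_deriv l (u i) \<le> g i \<and> g i \<le> right_deriv l (u i)"
  text \<open>An a priori bound for the multiplier of the norm constraint: \<open>?C g = s *\<^sub>R fs\<close> forces
    \<open>s * lam = norm (?C g)\<close>.\<close>
  define S where "S = (if norm fs = lam then
    (\<Sum>i=1..m. (\<bar>left_deriv l (u i)\<bar> + \<bar>right_deriv l (u i)\<bar>) * norm (y i *\<^sub>R \<phi> (x i))) / lam else 0)"
  have S: "S \<ge> 0" "norm fs \<noteq> lam \<Longrightarrow> S = 0"
    unfolding S_def using lam by (auto intro!: sum_nonneg divide_nonneg_pos)
  have C_bound: "fs \<bullet> ?C g \<le> lam\<^sup>2 * S" if "?box g" "norm fs = lam" for g
  proof -
    have "fs \<bullet> ?C g \<le> lam * norm (?C g)"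
      using norm_cauchy_schwarz[of fs] that(2) by (simp add: mult_right_mono)
    also have "\<dots> \<le> lam * (lam * S)"
      using norm_sum_le_box[OF that(1), of "\<lambda>i. y i *\<^sub>R \<phi> (x i)"] that(2) lam
      by (intro mult_left_mono) (auto simp: S_def)
    finally show ?thesis by (simp add: power2_eq_square)
  qed
  have "0 \<in> kkt_residuals l m \<phi> x y u fs S"
  proof (rule ccontr)
    assume "0 \<notin> kkt_residuals l m \<phi> x y u fs S"
    moreover have "kkt_residuals l m \<phi> x y u fs S \<noteq> {}"
      unfolding kkt_residuals_def using left_deriv_le_right_deriv[OF conv] S
      by (intro ex_in_conv[THEN iffD1] exI CollectI conjI) auto
    ultimately obtain p where "p \<noteq> 0"
      and sep: "\<And>q. q \<in> kkt_residuals l m \<phi> x y u fs S \<Longrightarrow> p \<bullet> p \<le> p \<bullet> q"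
      using min_norm_point_separates_0 compact_kkt_residuals convex_kkt_residuals by metis
    obtain p1 p2 p3 where p: "p = (p1, p2, p3)" by (cases p) auto
    have "p \<bullet> p > 0" using \<open>p \<noteq> 0\<close> by simp
    moreover have "p \<bullet> p + s * (p3 \<bullet> fs)
        \<le> p1 * (sum g {1..m} - 2 * real m) + p2 * (\<Sum>i=1..m. g i * y i) + p3 \<bullet> ?C g"
      if "?box g" "0 \<le> s" "s \<le> S" for g s
      using sep[of "(sum g {1..m} - 2 * real m, \<Sum>i=1..m. g i * y i, ?C g - s *\<^sub>R fs)"] that
      unfolding kkt_residuals_def p by (fastforce simp: inner_diff_right)
    ultimately show False
      using separated_kkt_residuals_not_minimal[OF conv m lam fs opt,
          where S = S and P = "p \<bullet> p" and pa = p1 and pb = p2 and pc = p3] S C_bound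
      unfolding u_def by blast
  qed
  then show thesis using that[of S] S(2) by blast
qed

lemma primal_minimizer_kkt:
  fixes \<phi> :: "'a \<Rightarrow> 'h::real_inner"
  assumes conv: "convex_on UNIV l" and m: "m > 0" and lam: "lam > 0" and fs: "norm fs \<le> lam"
    and opt: "\<And>f b \<rho>. norm f \<le> lam \<Longrightarrow> primal_obj l m \<phi> x y fs bs \<rho>s \<le> primal_obj l m \<phi> x y f b \<rho>"
  obtains g where "\<And>i. i \<in> {1..m} \<Longrightarrow> g i \<in> subdiff l (\<rho>s - y i * (fs \<bullet> \<phi> (x i) + bs))"
    "(\<Sum>i=1..m. g i) = 2 * real m" "(\<Sum>i=1..m. g i * y i) = 0"
    "fs \<bullet> (\<Sum>i=1..m. (g i * y i) *\<^sub>R \<phi> (x i)) = lam * norm (\<Sum>i=1..m. (g i * y i) *\<^sub>R \<phi> (x i))"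
proof -
  obtain S where S: "norm fs = lam \<or> S = 0"
    "0 \<in> kkt_residuals l m \<phi> x y (\<lambda>i. \<rho>s - y i * (fs \<bullet> \<phi> (x i) + bs)) fs S"
    by (rule zero_kkt_residual_at_minimizer[OF conv m lam fs opt])
  then obtain g where "\<forall>i\<in>{1..m}. left_deriv l (\<rho>s - y i * (fs \<bullet> \<phi> (x i) + bs)) \<le> g i
      \<and> g i \<le> right_deriv l (\<rho>s - y i * (fs \<bullet> \<phi> (x i) + bs))"
    "(\<Sum>i=1..m. g i) = 2 * real m" "(\<Sum>i=1..m. g i * y i) = 0"
    "fs \<bullet> (\<Sum>i=1..m. (g i * y i) *\<^sub>R \<phi> (x i)) = lam * norm (\<Sum>i=1..m. (g i * y i) *\<^sub>R \<phi> (x i))"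
    using kkt_multipliers_if_zero_residual[OF S(2) S(1)] by blast
  then show thesis using that subdiff_if_between_derivs[OF conv] by blast
qed

section \<open>Duality with the uncertainty sets\<close>

lemma sum_partition_atLeastAtMost:
  fixes m :: nat
  assumes "{1..m} = Mp \<union> Mn" "Mp \<inter> Mn = {}"
  shows "(\<Sum>i=1..m. h i) = (\<Sum>i\<in>Mp. h i) + (\<Sum>i\<in>Mn. h i)"
proof -
  have "finite (Mp \<union> Mn)" unfolding assms(1)[symmetric] by simp
  then have "finite Mp" "finite Mn" by auto
  then show ?thesis unfolding assms(1) using assms(2) by (rule sum.union_disjoint)
qed

lemma loss_sum_ge_uset:
  assumes "fo \<in> uset l m \<phi> x M c" and m: "m > 0" and label: "\<And>i. i \<in> M \<Longrightarrow> y i = \<sigma>"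
  shows "\<rho> - \<sigma> * (f \<bullet> fo + b) - c \<le> (1 / real m) * (\<Sum>i\<in>M. l (\<rho> - y i * (f \<bullet> \<phi> (x i) + b)))"
proof -
  define u where "u i = \<rho> - y i * (f \<bullet> \<phi> (x i) + b)" for i
  obtain \<alpha> where fo: "fo = (\<Sum>i\<in>M. \<alpha> i *\<^sub>R \<phi> (x i))" and "sum \<alpha> M = 1"
    and conj: "ereal (1 / real m) * (\<Sum>i\<in>M. conj_fun l (real m * \<alpha> i)) \<le> ereal c"
    using assms(1) unfolding uset_def by blast
  have "ereal (\<Sum>i\<in>M. real m * \<alpha> i * u i - l (u i)) \<le> (\<Sum>i\<in>M. conj_fun l (real m * \<alpha> i))"
    unfolding sum_ereal[symmetric] by (intro sum_mono fenchel_young)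
  then have "ereal (1 / real m) * ereal (\<Sum>i\<in>M. real m * \<alpha> i * u i - l (u i)) \<le> ereal c"
    using m conj by (meson ereal_mult_left_mono ereal_less_eq(5) order_trans of_nat_0_le_iff zero_le_divide_1_iff)
  then have "(\<Sum>i\<in>M. \<alpha> i * u i) - (1 / real m) * (\<Sum>i\<in>M. l (u i)) \<le> c"
    using m by (simp add: sum_subtractf sum_distrib_left[symmetric] field_simps)
  moreover have "(\<Sum>i\<in>M. \<alpha> i * u i) = (\<Sum>i\<in>M. \<rho> * \<alpha> i - \<sigma> * (f \<bullet> (\<alpha> i *\<^sub>R \<phi> (x i))) - \<sigma> * b * \<alpha> i)"
    by (intro sum.cong) (simp_all add: u_def label algebra_simps)
  also have "\<dots> = \<rho> * sum \<alpha> M - \<sigma> * (f \<bullet> fo) - \<sigma> * b * sum \<alpha> M"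
    by (simp add: fo sum_subtractf sum_distrib_left inner_sum_right)
  also have "\<dots> = \<rho> - \<sigma> * (f \<bullet> fo + b)" using \<open>sum \<alpha> M = 1\<close> by (simp add: algebra_simps)
  ultimately show ?thesis by (simp add: u_def)
qed

lemma weak_duality:
  fixes \<phi> :: "'a \<Rightarrow> 'h::real_inner"
  assumes m: "m > 0" and split: "{1..m} = Mp \<union> Mn" "Mp \<inter> Mn = {}"
    and yp: "\<And>i. i \<in> Mp \<Longrightarrow> y i = 1" and yn: "\<And>i. i \<in> Mn \<Longrightarrow> y i = -1"
    and f: "norm f \<le> lam" and fp: "fp \<in> uset l m \<phi> x Mp cp" and fn: "fn \<in> uset l m \<phi> x Mn cn"
  shows "- primal_obj l m \<phi> x y f b \<rho> \<le> cp + cn + lam * norm (fp - fn)"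
proof -
  have "- primal_obj l m \<phi> x y f b \<rho> = 2 * \<rho>
      - (1 / real m) * (\<Sum>i\<in>Mp. l (\<rho> - y i * (f \<bullet> \<phi> (x i) + b)))
      - (1 / real m) * (\<Sum>i\<in>Mn. l (\<rho> - y i * (f \<bullet> \<phi> (x i) + b)))"
    unfolding primal_obj_def sum_partition_atLeastAtMost[OF split] by (simp add: algebra_simps)
  also have "\<dots> \<le> cp + cn + f \<bullet> (fp - fn)"
    using loss_sum_ge_uset[OF fp m, of y 1 \<rho> f b] loss_sum_ge_uset[OF fn m, of y "-1" \<rho> f b] yp yn
    by (simp add: inner_diff_right)
  also have "f \<bullet> (fp - fn) \<le> lam * norm (fp - fn)"
    using norm_cauchy_schwarz[of f "fp - fn"] f by (meson mult_right_mono norm_ge_zero order_trans)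
  finally show ?thesis by simp
qed

lemma uset_at_subgradients:
  assumes "mono l" and m: "m > 0" and sub: "\<And>i. i \<in> M \<Longrightarrow> g i \<in> subdiff l (u i)"
    and "sum g M = real m"
  shows "(\<Sum>i\<in>M. (g i / real m) *\<^sub>R \<phi> (x i)) \<in> uset l m \<phi> x M ((1 / real m) * (\<Sum>i\<in>M. g i * u i - l (u i)))"
proof -
  have "sum (\<lambda>i. g i / real m) M = 1" using assms(4) m by (simp add: sum_divide_distrib[symmetric])
  moreover have "\<forall>i\<in>M. g i / real m \<ge> 0" using subdiff_nonneg_if_mono[OF assms(1) sub] by simp
  moreover have "(\<Sum>i\<in>M. conj_fun l (real m * (g i / real m))) = (\<Sum>i\<in>M. ereal (g i * u i - l (u i)))"
    using m sub by (intro sum.cong) (auto simp: conj_fun_subdiff)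
  ultimately show ?thesis unfolding uset_def by auto
qed

lemma dual_value_attained:
  fixes \<phi> :: "'a \<Rightarrow> 'h::real_inner"
  assumes "mono l" and m: "m > 0" and split: "{1..m} = Mp \<union> Mn" "Mp \<inter> Mn = {}"
    and yp: "\<And>i. i \<in> Mp \<Longrightarrow> y i = 1" and yn: "\<And>i. i \<in> Mn \<Longrightarrow> y i = -1"
    and sub: "\<And>i. i \<in> {1..m} \<Longrightarrow> g i \<in> subdiff l (\<rho> - y i * (f \<bullet> \<phi> (x i) + b))"
    and sum_g: "(\<Sum>i=1..m. g i) = 2 * real m" and sum_gy: "(\<Sum>i=1..m. g i * y i) = 0"
    and aligned: "f \<bullet> (\<Sum>i=1..m. (g i * y i) *\<^sub>R \<phi> (x i)) = lam * norm (\<Sum>i=1..m. (g i * y i) *\<^sub>R \<phi> (x i))"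
  obtains cp cn fp fn where "fp \<in> uset l m \<phi> x Mp cp" "fn \<in> uset l m \<phi> x Mn cn"
    "cp + cn + lam * norm (fp - fn) = - primal_obj l m \<phi> x y f b \<rho>"
proof -
  define u where "u i = \<rho> - y i * (f \<bullet> \<phi> (x i) + b)" for i
  define C where "C = (\<Sum>i=1..m. (g i * y i) *\<^sub>R \<phi> (x i))"
  note partition = sum_partition_atLeastAtMost[OF split]
  have "(\<Sum>i\<in>Mp. g i * y i) = sum g Mp" "(\<Sum>i\<in>Mn. g i * y i) = - sum g Mn"
    by (simp_all add: yp yn sum_negf[symmetric])
  then have class_sums: "sum g Mp = real m" "sum g Mn = real m"
    using sum_g sum_gy unfolding partition by linarith+
  have sub': "\<And>i. i \<in> Mp \<Longrightarrow> g i \<in> subdiff l (u i)" "\<And>i. i \<in> Mn \<Longrightarrow> g i \<in> subdiff l (u i)"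
    using sub unfolding u_def split(1) by blast+
  define fp where "fp = (\<Sum>i\<in>Mp. (g i / real m) *\<^sub>R \<phi> (x i))"
  define fn where "fn = (\<Sum>i\<in>Mn. (g i / real m) *\<^sub>R \<phi> (x i))"
  define cp where "cp = (1 / real m) * (\<Sum>i\<in>Mp. g i * u i - l (u i))"
  define cn where "cn = (1 / real m) * (\<Sum>i\<in>Mn. g i * u i - l (u i))"
  have "C = (\<Sum>i\<in>Mp. g i *\<^sub>R \<phi> (x i)) - (\<Sum>i\<in>Mn. g i *\<^sub>R \<phi> (x i))"
    unfolding C_def partition by (simp add: yp yn sum_negf[symmetric] cong: sum.cong)
  then have "fp - fn = (1 / real m) *\<^sub>R C"
    unfolding fp_def fn_def by (simp add: scaleR_sum_right scaleR_diff_right)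
  then have "lam * norm (fp - fn) = (f \<bullet> C) / real m"
    using m aligned by (simp add: C_def)
  moreover have "(\<Sum>i=1..m. g i * u i) = 2 * real m * \<rho> - f \<bullet> C"
  proof -
    have "(\<Sum>i=1..m. g i * u i) = \<rho> * (\<Sum>i=1..m. g i) - f \<bullet> C - b * (\<Sum>i=1..m. g i * y i)"
      by (simp add: u_def C_def algebra_simps sum_subtractf sum.distrib inner_sum_right sum_distrib_left)
    then show ?thesis using sum_g sum_gy by simp
  qed
  moreover have "cp + cn = (1 / real m) * ((\<Sum>i=1..m. g i * u i) - (\<Sum>i=1..m. l (u i)))"
    unfolding cp_def cn_def partition by (simp add: sum_subtractf algebra_simps)
  ultimately have "cp + cn + lam * norm (fp - fn) = 2 * \<rho> - (1 / real m) * (\<Sum>i=1..m. l (u i))"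
    using m by (simp add: field_simps)
  then have "cp + cn + lam * norm (fp - fn) = - primal_obj l m \<phi> x y f b \<rho>"
    by (simp add: primal_obj_def u_def)
  moreover have "fp \<in> uset l m \<phi> x Mp cp" "fn \<in> uset l m \<phi> x Mn cn"
    unfolding fp_def fn_def cp_def cn_def
    using uset_at_subgradients[OF assms(1) m sub'(1) class_sums(1)]
      uset_at_subgradients[OF assms(1) m sub'(2) class_sums(2)] by auto
  ultimately show thesis using that by blast
qed

lemma strong_duality_at_minimizer:
  fixes \<phi> :: "'a \<Rightarrow> 'h::real_inner"
  assumes "mono l" and conv: "convex_on UNIV l" and m: "m > 0" and lam: "lam > 0"
    and split: "{1..m} = Mp \<union> Mn" "Mp \<inter> Mn = {}"
    and yp: "\<And>i. i \<in> Mp \<Longrightarrow> y i = 1" and yn: "\<And>i. i \<in> Mn \<Longrightarrow> y i = -1"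
    and fs: "norm fs \<le> lam"
    and opt: "\<And>f b \<rho>. norm f \<le> lam \<Longrightarrow> primal_obj l m \<phi> x y fs bs \<rho>s \<le> primal_obj l m \<phi> x y f b \<rho>"
  shows "(INF t \<in> {cp + cn + lam * norm (fp - fn) | cp cn fp fn.
      fp \<in> uset l m \<phi> x Mp cp \<and> fn \<in> uset l m \<phi> x Mn cn}. ereal t)
    = ereal (- primal_obj l m \<phi> x y fs bs \<rho>s)"
proof -
  let ?D = "{cp + cn + lam * norm (fp - fn) | cp cn fp fn.
    fp \<in> uset l m \<phi> x Mp cp \<and> fn \<in> uset l m \<phi> x Mn cn}"
  obtain g where g: "\<And>i. i \<in> {1..m} \<Longrightarrow> g i \<in> subdiff l (\<rho>s - y i * (fs \<bullet> \<phi> (x i) + bs))"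
    "(\<Sum>i=1..m. g i) = 2 * real m" "(\<Sum>i=1..m. g i * y i) = 0"
    "fs \<bullet> (\<Sum>i=1..m. (g i * y i) *\<^sub>R \<phi> (x i)) = lam * norm (\<Sum>i=1..m. (g i * y i) *\<^sub>R \<phi> (x i))"
    using primal_minimizer_kkt[OF conv m lam fs opt] by blast
  obtain cp cn fp fn where "fp \<in> uset l m \<phi> x Mp cp" "fn \<in> uset l m \<phi> x Mn cn"
    and attained: "cp + cn + lam * norm (fp - fn) = - primal_obj l m \<phi> x y fs bs \<rho>s"
    using dual_value_attained[where \<phi> = \<phi> and x = x and f = fs and b = bs and \<rho> = \<rho>s,
        OF assms(1) m split yp yn g] by blast
  then have "- primal_obj l m \<phi> x y fs bs \<rho>s \<in> ?D" unfolding attained[symmetric] by blast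
  moreover have "- primal_obj l m \<phi> x y fs bs \<rho>s \<le> t" if "t \<in> ?D" for t
    using that weak_duality[where y = y and l = l and \<phi> = \<phi> and x = x and b = bs and \<rho> = \<rho>s,
        OF m split yp yn fs] by blast
  ultimately show ?thesis by (intro antisym INF_lower INF_greatest) auto
qed

theorem lemma1:
  fixes X :: "'a::metric_space set"
    and k :: "'a \<Rightarrow> 'a \<Rightarrow> real"
    and \<phi> :: "'a \<Rightarrow> 'h::{real_inner,complete_space}"
    and K :: real
    and l :: "real \<Rightarrow> real"
    and m1 :: nat and x :: "nat \<Rightarrow> 'a" and y :: "nat \<Rightarrow> real"
    and lam :: real
  defines "Mp \<equiv> {i\<in>{1..m1}. y i = 1}"
    and "Mn \<equiv> {i\<in>{1..m1}. y i = -1}"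
  assumes "compact X"
    and "continuous_on (X \<times> X) (\<lambda>(u, v). k u v)"
    and "is_rkhs_feature X k \<phi>"
    and "universal_kernel X \<phi>"
    and "\<forall>u\<in>X. sqrt (k u u) \<le> K"
    and "mono l" and "convex_on UNIV l" and "\<forall>z. l z \<ge> 0"
    and "\<forall>M>0. \<exists>z0. \<forall>z\<ge>z0. \<forall>g\<in>subdiff l z. g \<ge> M"
    and "\<forall>i\<in>{1..m1}. x i \<in> X \<and> (y i = 1 \<or> y i = -1)"
    and "Mp \<noteq> {}" and "Mn \<noteq> {}"
    and "lam > 0"
  shows "\<exists>f b \<rho>. (norm f)\<^sup>2 \<le> lam\<^sup>2 \<and>
           (\<forall>f' b' \<rho>'. (norm f')\<^sup>2 \<le> lam\<^sup>2 \<longrightarrow>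
               primal_obj l m1 \<phi> x y f b \<rho> \<le> primal_obj l m1 \<phi> x y f' b' \<rho>') \<and>
           ereal (primal_obj l m1 \<phi> x y f b \<rho>) =
             - (INF t \<in> {cp + cn + lam * norm (fp - fn) | cp cn fp fn.
                    fp \<in> uset l m1 \<phi> x Mp cp \<and> fn \<in> uset l m1 \<phi> x Mn cn}. ereal t)"
proof -
  note mono = assms(8) and conv = assms(9) and lam = assms(15)
  have nonneg: "\<And>z. l z \<ge> 0" using assms(10) by blast
  obtain ip jn where ip: "ip \<in> {1..m1}" "y ip = 1" and jn: "jn \<in> {1..m1}" "y jn = -1"
    using assms(13,14) by (auto simp: Mp_def Mn_def)
  then have m: "m1 > 0" by auto
  have "\<exists>z0. \<forall>u. M * (u - z0) \<le> l u" if "M > 0" for M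
    using linear_minorant_if_subdiff_unbounded[OF conv nonneg assms(11) that] by metis
  then obtain fs bs \<rho>s where fs: "norm fs \<le> lam"
    and opt: "\<And>f b \<rho>. norm f \<le> lam \<Longrightarrow> primal_obj l m1 \<phi> x y fs bs \<rho>s \<le> primal_obj l m1 \<phi> x y f b \<rho>"
    using primal_minimizer_exists[OF conv nonneg _ ip jn less_imp_le[OF lam]] by blast
  have split: "{1..m1} = Mp \<union> Mn" "Mp \<inter> Mn = {}" using assms(12) by (auto simp: Mp_def Mn_def)
  have yp: "\<And>i. i \<in> Mp \<Longrightarrow> y i = 1" and yn: "\<And>i. i \<in> Mn \<Longrightarrow> y i = -1"
    by (auto simp: Mp_def Mn_def)
  have "(norm f)\<^sup>2 \<le> lam\<^sup>2 \<longleftrightarrow> norm f \<le> lam" for f :: 'h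
    using lam by (auto intro: power_mono power2_le_imp_le)
  then show ?thesis
    using strong_duality_at_minimizer[OF mono conv m lam split yp yn fs opt] fs opt
    by (intro exI[of _ fs] exI[of _ bs] exI[of _ \<rho>s]) auto
qed

end
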